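(* Let $\mu>0$ and let $\mathcal{D}'_\mu$ be the class of random variables $D$ that are mixed Poisson$(X)$ with $\mathbb{P}(X=\lambda)=1-\mathbb{P}(X=0)=\mu/\lambda$ for some $\lambda\ge\mu$. Over $D\in\mathcal{D}'_\mu$, $q_D$ is minimized for $\lambda=\max(\mu,\mu_c)$, where $\mu_c$ is the largest real root of $2x=e^{x-1/2}$ ($\mu_c\approx1.756$).
   Context: For a non-negative real random variable $X$, $D$ is mixed Poisson$(X)$ if $\mathbb{P}(D=k)=\mathbb{E}(X^ke^{-X}/k!)$, $k\ge0$; its generating function is $f_D(s)=\mathbb{E}(e^{-(1-s)X})$ and $\bar f_D(s)=\mathbb{E}(Xe^{-(1-s)X})/\mathbb{E}(X)$. $z_D$ is the smallest root in $[0,1]$ of $s=\bar f_D(s)$ and $q_D=f_D(z_D)$. For $D$ in $\mathcal{D}'_\mu$ with parameter $\lambda$: $f_D(s)=1-\mu/\lambda+(\mu/\lambda)e^{-\lambda(1-s)}$ and $\bar f_D(s)=e^{-\lambda(1-s)}$. *)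

theory Defs
  imports "HOL-Probability.Probability"
begin

text \<open>Mixing variable X is a probability distribution on the reals (finite support suffices here).
  D = mixed Poisson(X). Generating functions of D as in the paper.\<close>

definition fD :: "real pmf \<Rightarrow> real \<Rightarrow> real" where
  "fD X s = measure_pmf.expectation X (\<lambda>x. exp (-(1 - s) * x))"

definition fbarD :: "real pmf \<Rightarrow> real \<Rightarrow> real" where
  "fbarD X s = measure_pmf.expectation X (\<lambda>x. x * exp (-(1 - s) * x))
               / measure_pmf.expectation X (\<lambda>x. x)"

definition zD :: "real pmf \<Rightarrow> real" where
  "zD X = (LEAST s. s \<in> {0..1} \<and> s = fbarD X s)"

definition qD :: "real pmf \<Rightarrow> real" where
  "qD X = fD X (zD X)"

definition Xmix :: "real \<Rightarrow> real \<Rightarrow> real pmf" where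
  "Xmix mu lam = map_pmf (\<lambda>b. if b then lam else 0) (bernoulli_pmf (mu / lam))"

definition mu_c :: real where
  "mu_c = (GREATEST x. 2 * x = exp (x - 1/2))"

end

theory Submission imports Defs begin

(* For D = mixed Poisson(X) with X = lam with probability mu/lam and X = 0
   otherwise, the generating functions are explicit: fbar_D(s) = exp(-lam (1 - s)) and
   f_D(s) = 1 - mu/lam + (mu/lam) exp(-lam (1 - s)).  Hence z_D is the extinction root
   z(lam) of a Poisson(lam) branching process and q_D = 1 - mu * y/lam, where y = 1 - z(lam)
   is the survival probability.  Minimising q_D thus means maximising y/lam.  Writing
   t = lam * y, the fixed-point equation gives y = 1 - exp(-t), so y/lam = phi t with
   phi t = (1 - exp(-t))^2 / t.  The function phi increases up to the positive root T of
   exp T = 2T + 1 and decreases afterwards, while t grows with lam because z(lam) is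
   antitone.  At lam = mu_c one has z = 1/(2 mu_c) and t = mu_c - 1/2 = T.  So for
   mu <= mu_c the ratio is maximal at lam = mu_c, and for mu > mu_c every admissible lam
   has t >= T, so the ratio is maximal at lam = mu. *)

section \<open>Generating functions of the two-point mixed Poisson class\<close>

lemma expectation_Xmix:
  assumes "0 < mu" "mu \<le> lam"
  shows "measure_pmf.expectation (Xmix mu lam) f = mu/lam * f lam + (1 - mu/lam) * f 0"
proof -
  have "0 \<le> mu/lam" "mu/lam \<le> 1" using assms by auto
  then show ?thesis unfolding Xmix_def by (simp add: mult.commute)
qed

lemma fbarD_Xmix:
  assumes "0 < mu" "mu \<le> lam"
  shows "fbarD (Xmix mu lam) s = exp (-(1 - s) * lam)"
  using assms unfolding fbarD_def by (simp add: expectation_Xmix)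

lemma fD_Xmix:
  assumes "0 < mu" "mu \<le> lam"
  shows "fD (Xmix mu lam) s = mu/lam * exp (-(1 - s) * lam) + (1 - mu/lam)"
  using assms unfolding fD_def by (simp add: expectation_Xmix mult.commute)

text \<open>The extinction probability of a Poisson(lam) Galton--Watson process: the smallest
  fixed point in [0,1] of its generating function.\<close>

definition ext_root :: "real \<Rightarrow> real" where
  "ext_root lam = (LEAST s. s \<in> {0..1} \<and> s = exp (-(1 - s) * lam))"

lemma zD_Xmix:
  assumes "0 < mu" "mu \<le> lam"
  shows "zD (Xmix mu lam) = ext_root lam"
  using assms unfolding zD_def ext_root_def by (simp add: fbarD_Xmix)

section \<open>The extinction root\<close>

text \<open>The fixed-point set is closed, bounded below and contains 1, so its least element
  exists.\<close>

lemma ext_root_least_fixed_point: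
  shows "ext_root lam \<in> {0..1}"
    and "ext_root lam = exp (-(1 - ext_root lam) * lam)"
    and "\<And>s. s \<in> {0..1} \<Longrightarrow> s = exp (-(1 - s) * lam) \<Longrightarrow> ext_root lam \<le> s"
proof -
  define S where "S = {0..1} \<inter> {s::real. s = exp (-(1 - s) * lam)}"
  have closed: "closed S" unfolding S_def
    by (intro closed_Int closed_atLeastAtMost closed_Collect_eq continuous_intros)
  have "1 \<in> S" unfolding S_def by simp
  then have nonempty: "S \<noteq> {}" by blast
  have bounded: "bdd_below S" unfolding S_def by (rule bdd_belowI[of _ 0]) auto
  have Inf_in: "Inf S \<in> S" by (rule closed_contains_Inf[OF nonempty bounded closed])
  have Inf_le: "\<And>s. s \<in> S \<Longrightarrow> Inf S \<le> s" using bounded by (simp add: cInf_lower)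
  have "ext_root lam = Inf S" unfolding ext_root_def
    by (rule Least_equality) (use Inf_in Inf_le in \<open>auto simp: S_def\<close>)
  then show "ext_root lam \<in> {0..1}" "ext_root lam = exp (-(1 - ext_root lam) * lam)"
    and "\<And>s. s \<in> {0..1} \<Longrightarrow> s = exp (-(1 - s) * lam) \<Longrightarrow> ext_root lam \<le> s"
    using Inf_in Inf_le by (auto simp: S_def)
qed

lemma ext_root_le:
  assumes "s \<in> {0..1}" "exp (-(1 - s) * lam) \<le> s"
  shows "ext_root lam \<le> s"
proof -
  let ?g = "\<lambda>x::real. exp (-(1 - x) * lam) - x"
  have "\<exists>x. 0 \<le> x \<and> x \<le> s \<and> ?g x = 0"
    by (rule IVT2') (use assms in \<open>auto intro!: continuous_intros\<close>)
  then obtain x where x: "0 \<le> x" "x \<le> s" "x = exp (-(1 - x) * lam)" by auto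
  then have "ext_root lam \<le> x" using assms(1) by (intro ext_root_least_fixed_point(3)) auto
  with x show ?thesis by linarith
qed

lemma ext_root_antitone:
  assumes "0 < a" "a \<le> b"
  shows "ext_root b \<le> ext_root a"
proof (rule ext_root_le)
  show za: "ext_root a \<in> {0..1}" by (rule ext_root_least_fixed_point(1))
  have "-(1 - ext_root a) * b \<le> -(1 - ext_root a) * a"
    using za assms by (intro mult_left_mono_neg) auto
  then have "exp (-(1 - ext_root a) * b) \<le> exp (-(1 - ext_root a) * a)" by simp
  then show "exp (-(1 - ext_root a) * b) \<le> ext_root a"
    using ext_root_least_fixed_point(2)[of a] by linarith
qed

lemma qD_Xmix:
  assumes "0 < mu" "mu \<le> lam"
  shows "qD (Xmix mu lam) = 1 - mu * ((1 - ext_root lam) / lam)"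
proof -
  have "qD (Xmix mu lam) = mu/lam * exp (-(1 - ext_root lam) * lam) + (1 - mu/lam)"
    unfolding qD_def using assms by (simp add: zD_Xmix fD_Xmix)
  also have "\<dots> = mu/lam * ext_root lam + (1 - mu/lam)"
    using ext_root_least_fixed_point(2)[of lam] by simp
  also have "\<dots> = 1 - mu * ((1 - ext_root lam) / lam)" using assms by (simp add: field_simps)
  finally show ?thesis .
qed

section \<open>The critical value mu_c\<close>

text \<open>mu_c is a root of 2x = exp(x - 1/2) larger than 1: there is a root in (1,3] by the
  intermediate value theorem, and no root beyond a root r > 1 by the tangent bound for exp.\<close>

lemma mu_c_root: "2 * mu_c = exp (mu_c - 1/2)" "mu_c > 1"
proof -
  let ?m = "\<lambda>x::real. exp (x - 1/2) - 2 * x"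
  have "exp (1/2::real) < 2"
  proof -
    have "exp (1/2::real) ^ 2 = exp 1" by (simp add: power2_eq_square exp_add[symmetric])
    also have "\<dots> \<le> 3" by (rule exp_le)
    finally have "exp (1/2::real) ^ 2 < 2^2" by simp
    then show ?thesis by (rule power_less_imp_less_base) simp
  qed
  then have m1: "?m 1 < 0" by simp
  have m3: "?m 3 > 0"
    using exp_lower_Taylor_quadratic[of "5/2::real"] by (simp add: power2_eq_square)
  have "\<exists>x. 1 \<le> x \<and> x \<le> 3 \<and> ?m x = 0"
    by (rule IVT') (use m1 m3 in \<open>auto intro!: continuous_intros\<close>)
  then obtain r where r: "1 \<le> r" "?m r = 0" by blast
  have r_gt_1: "r > 1" using r m1 by (cases "r = 1") auto
  have r_root: "2 * r = exp (r - 1/2)" using r by simp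
  have "mu_c = r" unfolding mu_c_def
  proof (rule Greatest_equality)
    fix x :: real assume x: "2 * x = exp (x - 1/2)"
    show "x \<le> r"
    proof (rule ccontr)
      assume "\<not> x \<le> r"
      have "exp (x - 1/2) = exp (r - 1/2) * exp (x - r)" by (simp add: exp_add[symmetric])
      also have "\<dots> \<ge> exp (r - 1/2) * (1 + (x - r))" by (intro mult_left_mono) auto
      finally have "2 * x \<ge> 2 * r * (1 + (x - r))" using x r_root by simp
      moreover have "(x - r) * (r - 1) > 0" using \<open>\<not> x \<le> r\<close> r_gt_1 by simp
      ultimately show False by (simp add: algebra_simps)
    qed
  qed (rule r_root)
  then show "2 * mu_c = exp (mu_c - 1/2)" "mu_c > 1" using r_root r_gt_1 by simp_all
qed

text \<open>It is a fixed point,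
  and the tangent line of the convex map s \<mapsto> exp(-(1-s)c) at 1/(2c) has slope 1/2, so
  no fixed point lies below it.\<close>

lemma ext_root_at_root:
  assumes c: "2 * c = exp (c - 1/2)" "c > 1"
  shows "ext_root c = 1 / (2 * c)"
proof -
  let ?z = "1 / (2 * c)" and ?r = "ext_root c"
  have fixed: "exp (-(1 - ?z) * c) = ?z"
  proof -
    have "-(1 - ?z) * c = -(c - 1/2)" using c by (simp add: field_simps)
    then have "exp (-(1 - ?z) * c) = inverse (exp (c - 1/2))" by (simp only: exp_minus)
    then show ?thesis using c by (simp add: inverse_eq_divide)
  qed
  have "?r \<le> ?z" using c fixed by (intro ext_root_le) auto
  moreover have "?z \<le> ?r"
  proof -
    have "?r = exp (-(1 - ?z) * c) * exp ((?r - ?z) * c)"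
      using ext_root_least_fixed_point(2)[of c] by (simp add: exp_add[symmetric] algebra_simps)
    also have "\<dots> \<ge> ?z * (1 + (?r - ?z) * c)"
      unfolding fixed using c by (intro mult_left_mono) auto
    also have "?z * (1 + (?r - ?z) * c) = ?z + (?r - ?z) / 2" using c by (simp add: field_simps)
    finally have "?z + (?r - ?z) / 2 \<le> ?r" .
    then show ?thesis by (simp add: field_simps)
  qed
  ultimately show ?thesis by simp
qed

section \<open>The function phi\<close>

definition phi :: "real \<Rightarrow> real" where
  "phi t = (1 - exp (-t))^2 / t"

lemma survival_ratio_eq_phi:
  assumes "lam > 0"
  shows "(1 - ext_root lam) / lam = phi (lam * (1 - ext_root lam))"
proof (cases "ext_root lam = 1")
  case False
  let ?y = "1 - ext_root lam"
  have "1 - exp (-(lam * ?y)) = ?y"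
    using ext_root_least_fixed_point(2)[of lam] by (simp add: algebra_simps)
  then show ?thesis unfolding phi_def using assms False by (simp add: power2_eq_square)
qed (simp add: phi_def)

lemma phi_deriv:
  assumes "t > 0"
  shows "\<exists>w>0. DERIV phi t :> w * (2 * t + 1 - exp t)"
proof -
  let ?w = "(1 - exp (-t)) * exp (-t) / t^2"
  have "exp (-t) < 1" using assms by simp
  then have w_pos: "?w > 0" using assms by simp
  have "DERIV phi t :> ((2 * (1 - exp (-t)) * exp (-t)) * t - (1 - exp (-t))^2 * 1) / t^2"
    unfolding phi_def using assms by (auto intro!: derivative_eq_intros simp: power2_eq_square)
  moreover have "((2 * (1 - exp (-t)) * exp (-t)) * t - (1 - exp (-t))^2 * 1) / t^2
      = ?w * (2 * t + 1 - exp t)"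
    using exp_minus_inverse[of t] by (simp add: algebra_simps power2_eq_square)
  ultimately show ?thesis using w_pos by auto
qed

text \<open>If T > 0 solves exp T = 2T + 1, then exp t \<le> 2t + 1 on [0,T] (convexity of exp on
  the chord from 0 to T) and exp t \<ge> 2t + 1 on [T, \<infinity>) (tangent bound at T).\<close>

lemma exp_below_chord:
  fixes T t :: real
  assumes T: "exp T = 2 * T + 1" "T > 0" and t: "0 \<le> t" "t \<le> T"
  shows "exp t \<le> 2 * t + 1"
proof -
  define a where "a = t / T"
  have a: "0 \<le> a" "a \<le> 1" using T t by (auto simp: a_def)
  have "exp ((1 - a) *\<^sub>R 0 + a *\<^sub>R T) \<le> (1 - a) * exp 0 + a * exp T"
    using convex_onD[OF exp_convex] a by blast
  moreover have "(1 - a) *\<^sub>R 0 + a *\<^sub>R T = t" using T by (simp add: a_def)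
  moreover have "(1 - a) * exp 0 + a * exp T = 2 * t + 1" using T by (simp add: a_def field_simps)
  ultimately show ?thesis by simp
qed

lemma exp_above_root:
  fixes T t :: real
  assumes T: "exp T = 2 * T + 1" "T \<ge> 1/2" and t: "T \<le> t"
  shows "exp t \<ge> 2 * t + 1"
proof -
  have "exp t = exp T * exp (t - T)" by (simp add: exp_add[symmetric])
  also have "\<dots> \<ge> exp T * (1 + (t - T))" by (intro mult_left_mono) auto
  also have "exp T * (1 + (t - T)) = (2 * T + 1) * (1 + (t - T))" using T by simp
  also have "(2 * T + 1) * (1 + (t - T)) \<ge> 2 * t + 1"
    using T t mult_right_mono[of 2 "2 * T + 1" "t - T"] by (simp add: algebra_simps)
  finally show ?thesis .
qed

lemma phi_increasing:
  assumes T: "exp T = 2 * T + 1" "T > 0" and ab: "0 < a" "a \<le> b" "b \<le> T"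
  shows "phi a \<le> phi b"
proof (rule DERIV_nonneg_imp_nondecreasing[OF ab(2)])
  fix x assume "a \<le> x" "x \<le> b"
  then have "x > 0" "exp x \<le> 2 * x + 1" using ab T exp_below_chord[of T x] by auto
  then show "\<exists>y. DERIV phi x :> y \<and> 0 \<le> y" using phi_deriv by fastforce
qed

lemma phi_decreasing:
  assumes T: "exp T = 2 * T + 1" "T \<ge> 1/2" and ab: "T \<le> a" "a \<le> b"
  shows "phi b \<le> phi a"
proof (rule DERIV_nonpos_imp_nonincreasing[OF ab(2)])
  fix x assume "a \<le> x" "x \<le> b"
  then have "x > 0" "exp x \<ge> 2 * x + 1" using ab T exp_above_root[of T x] by auto
  then show "\<exists>y. DERIV phi x :> y \<and> y \<le> 0"
    using phi_deriv by (fastforce intro: mult_nonneg_nonpos)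
qed

lemma phi_le_max:
  fixes T t :: real
  assumes T: "exp T = 2 * T + 1" "T \<ge> 1/2" and t: "t > 0"
  shows "phi t \<le> phi T"
  using phi_increasing[of T t T] phi_decreasing[of T T t] T t by (cases "t \<le> T") auto

section \<open>Maximising the survival ratio\<close>

text \<open>With T = mu_c - 1/2 the parameter lam = mu_c gives t = T.  Over lam \<ge> mu the ratio
  (1 - z)/lam is largest at lam = max mu mu_c.\<close>

lemma survival_ratio_maximal:
  assumes mu: "0 < mu" and lam: "mu \<le> lam"
  shows "(1 - ext_root lam) / lam \<le> (1 - ext_root (max mu mu_c)) / max mu mu_c"
proof -
  define c where "c = mu_c"
  define T where "T = c - 1/2"
  have c: "2 * c = exp (c - 1/2)" "c > 1" using mu_c_root by (simp_all add: c_def)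
  have T: "exp T = 2 * T + 1" "T \<ge> 1/2" using c by (simp_all add: T_def)
  have t_c: "c * (1 - ext_root c) = T"
    using c by (simp add: ext_root_at_root T_def field_simps)
  define t where "t = (\<lambda>l::real. l * (1 - ext_root l))"
  have t_mono: "t a \<le> t b" if "0 < a" "a \<le> b" for a b
    using that ext_root_antitone[OF that] ext_root_least_fixed_point(1)[of a]
    unfolding t_def by (intro mult_mono) auto
  have ratio: "(1 - ext_root l) / l = phi (t l)" if "l > 0" for l
    using survival_ratio_eq_phi that by (simp add: t_def)
  show ?thesis
  proof (cases "ext_root lam = 1")
    case True
    then show ?thesis using ext_root_least_fixed_point(1)[of "max mu mu_c"] mu by simp
  next
    case False
    then have "t lam > 0"
      using ext_root_least_fixed_point(1)[of lam] mu lam by (simp add: t_def)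
    show ?thesis
    proof (cases "mu \<le> c")
      case True
      have "phi (t lam) \<le> phi T" using phi_le_max[OF T \<open>t lam > 0\<close>] .
      then show ?thesis using ratio[of lam] ratio[of c] True mu lam c t_c
        by (simp add: c_def t_def max_def)
    next
      case False
      have "T \<le> t mu" using t_mono[of c mu] c False t_c by (simp add: t_def)
      then have "phi (t lam) \<le> phi (t mu)" using phi_decreasing T t_mono[OF mu lam] by blast
      then show ?thesis using ratio[of lam] ratio[of mu] False mu lam
        by (simp add: c_def max_def)
    qed
  qed
qed

theorem lemma3p5:
  fixes mu :: real
  assumes "mu > 0"
  shows "\<forall>lam \<ge> mu. qD (Xmix mu (max mu mu_c)) \<le> qD (Xmix mu lam)"
proof (intro allI impI)
  fix lam assume lam: "lam \<ge> mu"
  have "mu * ((1 - ext_root lam) / lam)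
      \<le> mu * ((1 - ext_root (max mu mu_c)) / max mu mu_c)"
    using survival_ratio_maximal[OF assms lam] assms by (intro mult_left_mono) auto
  then show "qD (Xmix mu (max mu mu_c)) \<le> qD (Xmix mu lam)"
    using qD_Xmix[OF assms lam] qD_Xmix[OF assms, of "max mu mu_c"] by simp
qed

end
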